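(* Fix $0<q<1$ and $0<p<2$. As $\eta\to0$, $$\sup_{G\in\mathcal G_p(\eta)}\tilde B^2(T_q,G)=\Big(\eta^p\log^{2-p}\log\frac1\eta\Big)(1+o(1)).$$
   Context: $E(t)=1-e^{-t}$, $\bar E=1-E$, $\bar G=1-G$. For a probability distribution $F$ on $[1,\infty)$, $(E\#F)(t)=\int E(t/\mu)\,dF(\mu)$ (one-to-one in $F$). $\mathcal G_p(\eta)=\{E\#F:\int\log^p(\mu)\,dF(\mu)\le\eta^p\}$. FDR functional $T_q(G)=\inf\{t:\bar G(t)\ge\frac1q\bar E(t)\}$. Bias proxy: for $G=E\#F$, $\tilde B^2(T_q,G)=\int\log^2(\mu)\big(1-e^{-T_q(G)/\mu}\big)\,dF(\mu)$. *)

theory Defs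
  imports "HOL-Probability.Probability"
begin

definition Ecdf :: "real \<Rightarrow> real" where
  "Ecdf t = 1 - exp (- t)"

definition mixing_dists :: "real measure set" where
  "mixing_dists = {F. prob_space F \<and> sets F = sets borel \<and> (AE mu in F. 1 \<le> mu)}"

definition Emix :: "real measure \<Rightarrow> real \<Rightarrow> real" where
  "Emix F t = (\<integral>mu. Ecdf (t / mu) \<partial>F)"

text \<open>The class G_p(eta), parametrised by the (unique) mixing distribution F.\<close>
definition Gclass :: "real \<Rightarrow> real \<Rightarrow> real measure set" where
  "Gclass p eta = {F \<in> mixing_dists.
      (\<integral>\<^sup>+ mu. ennreal (ln mu powr p) \<partial>F) \<le> ennreal (eta powr p)}"

definition Tq :: "real \<Rightarrow> (real \<Rightarrow> real) \<Rightarrow> real" where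
  "Tq q G = Inf {t. 1 - G t \<ge> (1 / q) * (1 - Ecdf t)}"

definition Bt2 :: "real \<Rightarrow> real measure \<Rightarrow> real" where
  "Bt2 q F = (\<integral>mu. (ln mu)\<^sup>2 * (1 - exp (- Tq q (Emix F) / mu)) \<partial>F)"

end

(*
  Split (ln mu)^2 = (ln mu)^p (ln mu)^(2-p) and cut at a level M.  On mu <= M, and
  on mu > M as long as T = T_q(G) <= M (use 1 - exp(-T/mu) <= T/mu and the decrease of
  (ln mu)^(2-p)/mu), the integrand is at most (ln M)^(2-p) (ln mu)^p, so the moment constraint
  gives (ln M)^(2-p) eta^p.  If T > M, the integrand is at most (ln T)^2, but then the defining
  inequality of T_q fails just below T, which forces F(M,oo) <= exp(-(T-1)/2)/q; this tail is
  negligible.  With M of order ln(1/eta), ln M ~ ln ln(1/eta).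

  Put mass eps = eta^p/(ln mu)^p at mu = ln(1/eta)/ln ln(1/eta) and the rest at 1.
  This saturates the constraint, and T_q >= ln((1/q-1)/eps) ~ p ln(1/eta) is much larger than mu,
  so the bias is eps (ln mu)^2 (1 - o(1)) = eta^p (ln ln(1/eta))^(2-p) (1 + o(1)).
*)

theory Submission
  imports Defs "HOL-Real_Asymp.Real_Asymp"
begin

lemma ln_powr_div_antimono:
  fixes a x y :: real
  assumes a: "0 < a" and x: "exp a \<le> x" and xy: "x \<le> y"
  shows "ln y powr a / y \<le> ln x powr a / x"
proof -
  have x0: "0 < x" using x by (smt (verit) exp_gt_zero)
  have y0: "0 < y" using x0 xy by simp
  have lnx: "a \<le> ln x" using x x0 by (metis exp_gt_zero ln_exp ln_le_cancel_iff)
  have lny: "ln x \<le> ln y" using x0 xy by simp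
  define u v where "u = x powr (1/a)" and "v = y powr (1/a)"
  have "exp 1 \<le> u"
    using powr_mono2[OF _ _ x, of "1/a"] a by (simp add: u_def powr_def)
  moreover have "u \<le> v" unfolding u_def v_def using xy x0 a by (intro powr_mono2) auto
  ultimately have "ln v / v \<le> ln u / u" by (rule ln_x_over_x_mono)
  \<comment> \<open>since \<open>x = u powr a\<close>, the claim is the \<open>a\<close>-th power of \<open>a\<close> times this\<close>
  then have "a * (ln v / v) \<le> a * (ln u / u)" by (rule mult_left_mono) (use a in simp)
  then have "ln y / v \<le> ln x / u" using x0 y0 a by (simp add: u_def v_def ln_powr)
  then have "(ln y / v) powr a \<le> (ln x / u) powr a"
    using a lnx lny by (intro powr_mono2) (auto simp: v_def)
  then show ?thesis
    using x0 y0 a lnx lny by (simp add: u_def v_def powr_divide powr_powr)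
qed

lemma power2_eq_powr_mult_powr:
  fixes l p :: real
  assumes "0 \<le> l"
  shows "l\<^sup>2 = l powr p * l powr (2 - p)"
  using assms by (cases "l = 0") (simp_all flip: powr_add add: powr_numeral)

lemma bias_integrand_le_powr:
  fixes mu T M p :: real
  assumes mu: "1 \<le> mu" and M: "exp 2 \<le> M" and p: "0 < p" "p < 2" and "mu \<le> M \<or> T \<le> M"
  shows "(ln mu)\<^sup>2 * (1 - exp (- T / mu)) \<le> ln M powr (2 - p) * ln mu powr p"
proof -
  have l0: "0 \<le> ln mu" using mu by simp
  have split: "(ln mu)\<^sup>2 = ln mu powr p * ln mu powr (2 - p)"
    by (rule power2_eq_powr_mult_powr[OF l0])
  have M1: "1 < M" using M by (smt (verit) one_less_exp_iff zero_less_numeral)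
  consider "mu \<le> M" | "M < mu" "T \<le> M" using assms(5) by linarith
  then show ?thesis
  proof cases
    case 1
    have "(ln mu)\<^sup>2 * (1 - exp (- T / mu)) \<le> (ln mu)\<^sup>2" by (simp add: mult_left_le)
    also have "\<dots> \<le> ln mu powr p * ln M powr (2 - p)"
      unfolding split using 1 mu p l0 by (intro mult_left_mono powr_mono2) auto
    finally show ?thesis by (simp add: mult.commute)
  next
    case 2
    have "1 - exp (- T / mu) \<le> T / mu" using exp_ge_add_one_self[of "- T / mu"] by simp
    then have "(ln mu)\<^sup>2 * (1 - exp (- T / mu)) \<le> (ln mu)\<^sup>2 * (T / mu)" by (rule mult_left_mono) simp
    also have "\<dots> \<le> (ln mu)\<^sup>2 * (M / mu)" using 2 mu by (intro mult_left_mono divide_right_mono) auto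
    also have "\<dots> = ln mu powr p * (ln mu powr (2 - p) / mu) * M" using split by simp
    also have "\<dots> \<le> ln mu powr p * (ln M powr (2 - p) / M) * M"
    proof -
      have "exp (2 - p) \<le> M" using M p by (smt (verit) exp_le_cancel_iff)
      then have "ln mu powr (2 - p) / mu \<le> ln M powr (2 - p) / M"
        using ln_powr_div_antimono[of "2 - p" M mu] p 2 by simp
      then show ?thesis using M1 by (intro mult_right_mono mult_left_mono) auto
    qed
    also have "\<dots> = ln M powr (2 - p) * ln mu powr p" using M1 by simp
    finally show ?thesis .
  qed
qed

lemma bias_integrand_le_ln_sq:
  fixes mu T :: real
  assumes mu: "1 \<le> mu" and T: "exp 2 \<le> T"
  shows "(ln mu)\<^sup>2 * (1 - exp (- T / mu)) \<le> (ln T)\<^sup>2"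
proof (cases "mu \<le> T")
  case True
  have "(ln mu)\<^sup>2 * (1 - exp (- T / mu)) \<le> (ln mu)\<^sup>2" by (simp add: mult_left_le)
  also have "\<dots> \<le> (ln T)\<^sup>2" using True mu by (intro power_mono) auto
  finally show ?thesis .
next
  case False
  have T1: "1 < T" using T by (smt (verit) one_less_exp_iff zero_less_numeral)
  have "1 - exp (- T / mu) \<le> T / mu" using exp_ge_add_one_self[of "- T / mu"] by simp
  then have "(ln mu)\<^sup>2 * (1 - exp (- T / mu)) \<le> (ln mu)\<^sup>2 * (T / mu)" by (rule mult_left_mono) simp
  also have "\<dots> = (ln mu powr 2 / mu) * T" using mu by (cases "mu = 1") auto
  also have "\<dots> \<le> (ln T powr 2 / T) * T"
    using ln_powr_div_antimono[of 2 T mu] False T T1 by (intro mult_right_mono) auto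
  also have "\<dots> = (ln T)\<^sup>2" using T1 by (simp add: powr_numeral)
  finally show ?thesis .
qed

lemma ln_sq_le_exp:
  fixes T :: real
  assumes "1 \<le> T"
  shows "(ln T)\<^sup>2 \<le> 64 * exp (T / 4)"
proof -
  have exp_ge: "T / 8 \<le> exp (T / 8)" using exp_ge_add_one_self[of "T / 8"] by linarith
  have "(ln T)\<^sup>2 \<le> T\<^sup>2" using assms ln_le_minus_one[of T] by (intro power_mono) auto
  also have "\<dots> = 64 * (T / 8)\<^sup>2" by (simp add: power2_eq_square)
  also have "\<dots> \<le> 64 * (exp (T / 8))\<^sup>2" using exp_ge assms by (intro mult_left_mono power_mono) auto
  also have "\<dots> = 64 * exp (T / 4)" by (simp flip: exp_add add: power2_eq_square)
  finally show ?thesis .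
qed

section \<open>Mixtures and the upper bound\<close>

lemma mixing_distsD:
  assumes "F \<in> mixing_dists"
  shows "prob_space F" "sets F = sets borel" "AE mu in F. 1 \<le> mu" "space F = UNIV"
    "\<And>f. f \<in> borel_measurable borel \<Longrightarrow> f \<in> borel_measurable F"
proof -
  show F: "prob_space F" "sets F = sets borel" "AE mu in F. 1 \<le> mu"
    using assms by (auto simp: mixing_dists_def)
  show "space F = UNIV" using sets_eq_imp_space_eq[OF F(2)] by simp
  show "\<And>f. f \<in> borel_measurable borel \<Longrightarrow> f \<in> borel_measurable F"
    by (subst measurable_cong_sets[OF F(2) refl]) simp
qed

lemma integrable_exp_neg_divide:
  assumes "F \<in> mixing_dists"
  shows "integrable F (\<lambda>mu. exp (- (t / mu)))"
proof -
  note F = mixing_distsD[OF assms]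
  interpret prob_space F by (rule F(1))
  show ?thesis
  proof (rule integrable_const_bound[where B = "exp \<bar>t\<bar>"])
    show "AE mu in F. norm (exp (- (t / mu))) \<le> exp \<bar>t\<bar>"
      using F(3)
    proof (rule AE_mp, intro AE_I2 impI)
      fix mu :: real assume "1 \<le> mu"
      then have "\<bar>t / mu\<bar> \<le> \<bar>t\<bar>" by (simp add: abs_divide divide_le_eq mult_le_cancel_left1)
      then have "- (t / mu) \<le> \<bar>t\<bar>" by linarith
      then show "norm (exp (- (t / mu))) \<le> exp \<bar>t\<bar>" by simp
    qed
    show "(\<lambda>mu. exp (- (t / mu))) \<in> borel_measurable F" by (intro F(5)) measurable
  qed
qed

lemma one_minus_Emix:
  assumes "F \<in> mixing_dists"
  shows "1 - Emix F t = (\<integral>mu. exp (- (t / mu)) \<partial>F)"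
proof -
  interpret prob_space F by (rule mixing_distsD(1)[OF assms])
  have "Emix F t = (\<integral>mu. 1 - exp (- (t / mu)) \<partial>F)" by (simp add: Emix_def Ecdf_def)
  also have "\<dots> = 1 - (\<integral>mu. exp (- (t / mu)) \<partial>F)"
    using integrable_exp_neg_divide[OF assms] by (simp add: prob_space)
  finally show ?thesis by simp
qed

lemma Tq_Emix:
  assumes "F \<in> mixing_dists"
  shows "Tq q (Emix F) = Inf {t. exp (- t) / q \<le> (\<integral>mu. exp (- (t / mu)) \<partial>F)}"
  by (simp add: Tq_def one_minus_Emix[OF assms] Ecdf_def)

text \<open>For \<open>t < 0\<close> every mixture has \<open>1 - (E # F)(t) \<le> exp (- t) < exp (- t) / q\<close>, so the set
  whose infimum is \<open>T\<^sub>q\<close> contains only nonnegative times.\<close>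
lemma exp_neg_div_le_integral_imp_nonneg:
  assumes F: "F \<in> mixing_dists" and q: "0 < q" "q < 1"
    and t: "exp (- t) / q \<le> (\<integral>mu. exp (- (t / mu)) \<partial>F)"
  shows "0 \<le> t"
proof (rule ccontr)
  assume "\<not> 0 \<le> t"
  note F' = mixing_distsD[OF F]
  interpret prob_space F by (rule F'(1))
  have "(\<integral>mu. exp (- (t / mu)) \<partial>F) \<le> (\<integral>mu. exp (- t) \<partial>F)"
  proof (rule integral_mono_AE[OF integrable_exp_neg_divide[OF F] integrable_const])
    show "AE mu in F. exp (- (t / mu)) \<le> exp (- t)"
      using F'(3) by eventually_elim (use \<open>\<not> 0 \<le> t\<close> in \<open>simp add: le_divide_eq mult_le_cancel_left1\<close>)
  qed
  also have "\<dots> < exp (- t) / q" using q by (simp add: prob_space less_divide_eq)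
  finally show False using t by simp
qed

lemma less_Tq_Emix:
  assumes F: "F \<in> mixing_dists" and q: "0 < q" "q < 1" and t: "t < Tq q (Emix F)"
  shows "(\<integral>mu. exp (- (t / mu)) \<partial>F) < exp (- t) / q"
proof (rule ccontr)
  let ?S = "{t. exp (- t) / q \<le> (\<integral>mu. exp (- (t / mu)) \<partial>F)}"
  assume "\<not> ?thesis"
  then have "t \<in> ?S" by simp
  moreover have "bdd_below ?S" using exp_neg_div_le_integral_imp_nonneg[OF F q] by (intro bdd_belowI[of _ 0]) auto
  ultimately have "Inf ?S \<le> t" by (rule cInf_lower)
  then show False using t by (simp add: Tq_Emix[OF F])
qed

text \<open>Below \<open>T\<^sub>q\<close> we have \<open>exp (- t / M) F(M,\<infinity>) \<le> 1 - (E # F)(t) < exp (- t) / q\<close>: a large \<open>T\<^sub>q\<close>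
  forces an exponentially small tail.\<close>
lemma tail_measure_le_if_less_Tq:
  assumes F: "F \<in> mixing_dists" and q: "0 < q" "q < 1"
    and t: "0 \<le> t" "t < Tq q (Emix F)" and M: "2 \<le> M"
  shows "measure F {M<..} \<le> exp (- t / 2) / q"
proof -
  note F' = mixing_distsD[OF F]
  interpret prob_space F by (rule F'(1))
  have "exp (- (t / M)) * measure F {M<..} = (\<integral>mu. exp (- (t / M)) * indicator {M<..} mu \<partial>F)"
    using F' by simp
  also have "\<dots> \<le> (\<integral>mu. exp (- (t / mu)) \<partial>F)"
  proof (rule integral_mono)
    show "integrable F (\<lambda>mu. exp (- (t / M)) * indicator {M<..} mu)"
      using F' by (intro integrable_mult_right integrable_real_indicator) (auto simp: emeasure_eq_measure)
    show "integrable F (\<lambda>mu. exp (- (t / mu)))" by (rule integrable_exp_neg_divide[OF F])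
    show "exp (- (t / M)) * indicator {M<..} mu \<le> exp (- (t / mu))" for mu
      using t M by (cases "M < mu") (auto simp: indicator_def intro!: divide_left_mono)
  qed
  also have "\<dots> < exp (- t) / q" by (rule less_Tq_Emix[OF F q t(2)])
  finally have "measure F {M<..} < exp (- t + t / M) / q"
    by (simp add: exp_add exp_diff exp_minus field_simps)
  also have "\<dots> \<le> exp (- t / 2) / q"
  proof -
    have "t / M \<le> t / 2" using t M by (intro divide_left_mono) auto
    then have "- t + t / M \<le> - t / 2" by linarith
    then show ?thesis using q by (intro divide_right_mono) auto
  qed
  finally show ?thesis by simp
qed

lemma bias_integrand_le:
  fixes mu T M p :: real
  assumes mu: "1 \<le> mu" and M: "exp 2 \<le> M" and p: "0 < p" "p < 2"
  shows "(ln mu)\<^sup>2 * (1 - exp (- T / mu))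
    \<le> ln M powr (2 - p) * ln mu powr p + (if M < T then (ln T)\<^sup>2 else 0) * indicator {M<..} mu"
proof (cases "M < T \<and> M < mu")
  case True
  then have "(ln mu)\<^sup>2 * (1 - exp (- T / mu)) \<le> (ln T)\<^sup>2"
    using M mu by (intro bias_integrand_le_ln_sq) auto
  then show ?thesis using True by (simp add: add_increasing)
next
  case False
  then have "(ln mu)\<^sup>2 * (1 - exp (- T / mu)) \<le> ln M powr (2 - p) * ln mu powr p"
    using M mu p by (intro bias_integrand_le_powr) auto
  then show ?thesis by (auto simp: indicator_def intro: add_increasing2)
qed

lemma Bt2_le_moment_plus_tail:
  fixes q p eta M :: real
  assumes F: "F \<in> Gclass p eta" and M: "exp 2 \<le> M" and p: "0 < p" "p < 2"
  defines "T \<equiv> Tq q (Emix F)"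
  shows "Bt2 q F \<le> ln M powr (2 - p) * eta powr p
    + (if M < T then (ln T)\<^sup>2 else 0) * measure F {M<..}"
proof -
  define K D where "K = ln M powr (2 - p)" and "D = (if M < T then (ln T)\<^sup>2 else 0)"
  have Fm: "F \<in> mixing_dists"
    and moment: "(\<integral>\<^sup>+ mu. ennreal (ln mu powr p) \<partial>F) \<le> ennreal (eta powr p)"
    using F by (auto simp: Gclass_def)
  note F' = mixing_distsD[OF Fm]
  interpret prob_space F by (rule F'(1))
  have meas: "(\<lambda>mu. ln mu powr p) \<in> borel_measurable F" by (intro F'(5)) measurable
  have int_moment: "integrable F (\<lambda>mu. ln mu powr p)"
    using moment by (intro integrableI_nonneg[OF meas]) (auto simp: le_less_trans)
  have int_ind: "integrable F (indicator {M<..} :: real \<Rightarrow> real)"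
    using F' by (intro integrable_real_indicator) (auto simp: emeasure_eq_measure)
  have "Bt2 q F \<le> (\<integral>mu. K * ln mu powr p + D * indicator {M<..} mu \<partial>F)"
    unfolding Bt2_def T_def[symmetric]
  proof (rule integral_mono_AE')
    show "integrable F (\<lambda>mu. K * ln mu powr p + D * indicator {M<..} mu)"
      using int_moment int_ind by (intro Bochner_Integration.integrable_add integrable_mult_right)
    show "AE mu in F. (ln mu)\<^sup>2 * (1 - exp (- T / mu)) \<le> K * ln mu powr p + D * indicator {M<..} mu"
      using F'(3) by eventually_elim (unfold K_def D_def, erule bias_integrand_le[OF _ M p])
    show "AE mu in F. 0 \<le> K * ln mu powr p + D * indicator {M<..} mu"
      by (simp add: K_def D_def)
  qed
  also have "\<dots> = K * (\<integral>mu. ln mu powr p \<partial>F) + D * measure F {M<..}"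
    using int_moment int_ind F' by simp
  also have "\<dots> \<le> K * eta powr p + D * measure F {M<..}"
    using integral_eq_nn_integral[OF meas] moment by (auto simp: K_def intro!: mult_left_mono enn2real_leI)
  finally show ?thesis by (simp add: K_def D_def)
qed

lemma Bt2_le:
  fixes q p eta M :: real
  assumes q: "0 < q" "q < 1" and p: "0 < p" "p < 2"
    and M: "exp 2 \<le> M" and F: "F \<in> Gclass p eta"
  shows "Bt2 q F \<le> ln M powr (2 - p) * eta powr p + 64 * exp (1 / 2) * exp (- M / 4) / q"
proof -
  define T where "T = Tq q (Emix F)"
  have Fm: "F \<in> mixing_dists" using F by (simp add: Gclass_def)
  have "(if M < T then (ln T)\<^sup>2 else 0) * measure F {M<..} \<le> 64 * exp (1 / 2) * exp (- M / 4) / q"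
  proof (cases "M < T")
    case True
    have M2: "2 < M" using M exp_ge_add_one_self[of 2] by linarith
    have "measure F {M<..} \<le> exp (- (T - 1) / 2) / q"
      using True M2 by (intro tail_measure_le_if_less_Tq[OF Fm q]) (auto simp: T_def)
    moreover have "(ln T)\<^sup>2 \<le> 64 * exp (T / 4)" using True M2 by (intro ln_sq_le_exp) simp
    ultimately have "(ln T)\<^sup>2 * measure F {M<..} \<le> 64 * exp (T / 4) * (exp (- (T - 1) / 2) / q)"
      by (intro mult_mono) auto
    also have "\<dots> = 64 * exp (1 / 2) * exp (- T / 4) / q"
      by (simp flip: exp_add add: field_simps)
    also have "\<dots> \<le> 64 * exp (1 / 2) * exp (- M / 4) / q"
      using True q by (intro divide_right_mono mult_left_mono) auto
    finally show ?thesis using True by simp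
  qed (use q in simp)
  then show ?thesis
    using Bt2_le_moment_plus_tail[OF F M p, of q] unfolding T_def[symmetric] by linarith
qed

section \<open>Two-point mixtures and the lower bound\<close>

definition two_point :: "real \<Rightarrow> real \<Rightarrow> real measure" where
  "two_point eps mu = distr (measure_pmf (bernoulli_pmf eps)) borel (\<lambda>b. if b then mu else 1)"

lemma integral_two_point:
  assumes "0 \<le> eps" "eps \<le> 1" and "f \<in> borel_measurable borel"
  shows "(\<integral>x. f x \<partial>two_point eps mu) = eps * f mu + (1 - eps) * f 1"
  unfolding two_point_def using assms by (subst integral_distr) auto

lemma nn_integral_two_point:
  assumes "0 \<le> eps" "eps \<le> 1" and "f \<in> borel_measurable borel"
  shows "(\<integral>\<^sup>+x. f x \<partial>two_point eps mu) = ennreal eps * f mu + ennreal (1 - eps) * f 1"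
  unfolding two_point_def using assms by (subst nn_integral_distr) (auto simp: mult.commute)

lemma two_point_in_mixing_dists:
  assumes "0 \<le> eps" "eps \<le> 1" "1 \<le> mu"
  shows "two_point eps mu \<in> mixing_dists"
proof -
  have "prob_space (two_point eps mu)" unfolding two_point_def
    by (intro prob_space.prob_space_distr) (auto simp: measure_pmf.prob_space_axioms)
  moreover have "AE x in two_point eps mu. 1 \<le> x" unfolding two_point_def
    using assms by (subst AE_distr_iff) (auto simp: AE_measure_pmf_iff)
  moreover have "sets (two_point eps mu) = sets borel" by (simp add: two_point_def)
  ultimately show ?thesis by (simp add: mixing_dists_def)
qed

lemma two_point_in_Gclass:
  assumes "0 \<le> eps" "eps \<le> 1" "1 \<le> mu" and "eps * ln mu powr p \<le> eta powr p"
  shows "two_point eps mu \<in> Gclass p eta"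
proof -
  have "(\<integral>\<^sup>+x. ennreal (ln x powr p) \<partial>two_point eps mu) = ennreal (eps * ln mu powr p)"
    using assms by (subst nn_integral_two_point) (auto simp: ennreal_mult)
  then show ?thesis
    using assms two_point_in_mixing_dists by (simp add: Gclass_def ennreal_leI)
qed

lemma Tq_two_point_ge:
  assumes q: "0 < q" "q < 1" and eps: "0 < eps" "eps < 1" and mu: "1 < mu"
  shows "ln ((1 / q - 1) / eps) \<le> Tq q (Emix (two_point eps mu))"
proof -
  have F: "two_point eps mu \<in> mixing_dists" using eps mu by (intro two_point_in_mixing_dists) auto
  let ?S = "{t. exp (- t) / q \<le> (\<integral>x. exp (- (t / x)) \<partial>two_point eps mu)}"
  have S: "t \<in> ?S \<longleftrightarrow> exp (- t) / q \<le> eps * exp (- (t / mu)) + (1 - eps) * exp (- t)" for t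
    using eps by (simp add: integral_two_point)
  have "?S \<noteq> {}"
  proof -
    define t where "t = ln (1 / (q * eps)) * mu / (mu - 1)"
    have "- (t / mu) = ln (1 / (q * eps)) - t" using mu by (simp add: t_def field_simps)
    then have "exp (- (t / mu)) = exp (ln (1 / (q * eps))) * exp (- t)" by (simp flip: exp_add)
    also have "exp (ln (1 / (q * eps))) = 1 / (q * eps)" using q eps by simp
    finally have "eps * exp (- (t / mu)) = exp (- t) / q" using eps by simp
    then have "t \<in> ?S" using S eps by simp
    then show ?thesis by blast
  qed
  moreover have "ln ((1 / q - 1) / eps) \<le> t" if t: "t \<in> ?S" for t
  proof -
    have "0 \<le> t" using exp_neg_div_le_integral_imp_nonneg[OF F q] t by simp
    then have "exp (- (t / mu)) \<le> 1" using mu by simp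
    then have "eps * exp (- (t / mu)) \<le> eps" using eps by (simp add: mult_left_le)
    moreover have "exp (- t) / q \<le> eps * exp (- (t / mu)) + (1 - eps) * exp (- t)"
      using S t by blast
    ultimately have "exp (- t) / q \<le> eps + (1 - eps) * exp (- t)" by linarith
    then have "exp (- t) * (1 / q - 1) \<le> eps - eps * exp (- t)" by (simp add: algebra_simps)
    also have "\<dots> \<le> eps" using eps by simp
    finally have "exp (- t) * (1 / q - 1) \<le> eps" .
    then have "(1 / q - 1) / eps \<le> exp t" using eps by (simp add: exp_minus field_simps)
    moreover have "0 < 1 / q - 1" using q by simp
    ultimately show ?thesis using eps ln_le_cancel_iff[of _ "exp t"] by simp
  qed
  ultimately show ?thesis unfolding Tq_Emix[OF F] by (rule cInf_greatest)
qed

lemma Bt2_two_point_ge: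
  assumes q: "0 < q" "q < 1" and eps: "0 < eps" "eps < 1" and mu: "1 < mu"
  shows "eps * (ln mu)\<^sup>2 * (1 - exp (- ln ((1 / q - 1) / eps) / mu)) \<le> Bt2 q (two_point eps mu)"
proof -
  define T where "T = Tq q (Emix (two_point eps mu))"
  have "ln ((1 / q - 1) / eps) \<le> T" unfolding T_def by (rule Tq_two_point_ge[OF q eps mu])
  then have "1 - exp (- ln ((1 / q - 1) / eps) / mu) \<le> 1 - exp (- T / mu)"
    using mu by (simp add: divide_right_mono)
  moreover have "Bt2 q (two_point eps mu) = eps * (ln mu)\<^sup>2 * (1 - exp (- T / mu))"
    unfolding Bt2_def T_def[symmetric] using eps by (simp add: integral_two_point)
  ultimately show ?thesis using eps by (simp add: mult_left_mono)
qed

lemma Sup_Bt2_bounds: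
  fixes q p eta eps mu M :: real
  assumes q: "0 < q" "q < 1" and p: "0 < p" "p < 2"
    and eps: "0 < eps" "eps < 1" and mu: "1 < mu" and moment: "eps * ln mu powr p \<le> eta powr p"
    and M: "exp 2 \<le> M"
  shows "bdd_above (Bt2 q ` Gclass p eta)"
    and "eps * (ln mu)\<^sup>2 * (1 - exp (- ln ((1 / q - 1) / eps) / mu)) \<le> Sup (Bt2 q ` Gclass p eta)"
    and "Sup (Bt2 q ` Gclass p eta) \<le> ln M powr (2 - p) * eta powr p + 64 * exp (1 / 2) * exp (- M / 4) / q"
proof -
  have two_point: "two_point eps mu \<in> Gclass p eta"
    using eps mu moment by (intro two_point_in_Gclass) auto
  have upper: "\<And>F. F \<in> Gclass p eta
      \<Longrightarrow> Bt2 q F \<le> ln M powr (2 - p) * eta powr p + 64 * exp (1 / 2) * exp (- M / 4) / q"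
    by (rule Bt2_le[OF q p M])
  then show bdd: "bdd_above (Bt2 q ` Gclass p eta)" by (rule bdd_aboveI2)
  have "eps * (ln mu)\<^sup>2 * (1 - exp (- ln ((1 / q - 1) / eps) / mu)) \<le> Bt2 q (two_point eps mu)"
    by (rule Bt2_two_point_ge[OF q eps mu])
  also have "\<dots> \<le> Sup (Bt2 q ` Gclass p eta)" using bdd two_point by (intro cSup_upper) auto
  finally show "eps * (ln mu)\<^sup>2 * (1 - exp (- ln ((1 / q - 1) / eps) / mu)) \<le> Sup (Bt2 q ` Gclass p eta)" .
  show "Sup (Bt2 q ` Gclass p eta) \<le> ln M powr (2 - p) * eta powr p + 64 * exp (1 / 2) * exp (- M / 4) / q"
    using two_point upper by (intro cSup_least) auto
qed

theorem lemma5p4: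
  fixes q p :: real
  assumes "0 < q" "q < 1" "0 < p" "p < 2"
  shows "(\<forall>\<^sub>F eta in at_right 0. bdd_above (Bt2 q ` Gclass p eta))
    \<and> ((\<lambda>eta. Sup (Bt2 q ` Gclass p eta))
         \<sim>[at_right 0] (\<lambda>eta. eta powr p * (ln (ln (1 / eta))) powr (2 - p)))"
proof -
  note q = assms(1,2) and p = assms(3,4)
  define mu eps M :: "real \<Rightarrow> real"
    where "mu eta = ln (1 / eta) / ln (ln (1 / eta))"
      and "eps eta = eta powr p / ln (mu eta) powr p"
      and "M eta = 4 * (p + 1) * ln (1 / eta)" for eta
  \<comment> \<open>this cut-off makes the tail term \<open>exp (- M / 4) = eta powr (p + 1)\<close> negligible\<close>
  define L U :: "real \<Rightarrow> real"
    where "L eta = eps eta * (ln (mu eta))\<^sup>2 * (1 - exp (- ln ((1 / q - 1) / eps eta) / mu eta))"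
      and "U eta = ln (M eta) powr (2 - p) * eta powr p + 64 * exp (1 / 2) * eta powr (p + 1) / q"
    for eta
  have "\<forall>\<^sub>F eta in at_right (0 :: real). 0 < eta" by (rule eventually_at_right_less)
  moreover have "\<forall>\<^sub>F eta in at_right 0. 1 < mu eta" unfolding mu_def by real_asymp
  moreover have "\<forall>\<^sub>F eta in at_right 0. eps eta < 1" using p unfolding eps_def mu_def by real_asymp
  moreover have "\<forall>\<^sub>F eta in at_right 0. exp 2 \<le> M eta" using p unfolding M_def by real_asymp
  ultimately have bounds: "\<forall>\<^sub>F eta in at_right 0. bdd_above (Bt2 q ` Gclass p eta)
      \<and> Sup (Bt2 q ` Gclass p eta) \<in> {L eta..U eta}"
  proof eventually_elim
    case (elim eta)
    then have "0 < eps eta" "eps eta * ln (mu eta) powr p = eta powr p"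
      and "exp (- M eta / 4) = eta powr (p + 1)" by (simp_all add: eps_def M_def powr_def ln_div)
    with elim show ?case
      unfolding L_def U_def using Sup_Bt2_bounds[OF q p, of "eps eta" "mu eta" eta "M eta"] by simp
  qed
  have L: "L \<sim>[at_right 0] (\<lambda>eta. eta powr p * (ln (ln (1 / eta))) powr (2 - p))"
    using p q unfolding L_def eps_def mu_def by real_asymp
  have U: "U \<sim>[at_right 0] (\<lambda>eta. eta powr p * (ln (ln (1 / eta))) powr (2 - p))"
    using p q unfolding U_def M_def by real_asymp
  show ?thesis
    using bounds by (auto elim: eventually_mono intro!: asymp_equiv_sandwich_real[OF L U])
qed

end
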